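(* Let $y>0$ be fixed. For $\xi\in\mathbf{R}^{2\times 2}$ let $[\xi]=\xi-\xi_{11}\,e_1\otimes e_1$, where $e_1=(1,0)$, and define $W:\mathbf{R}^{2\times 2}\to\mathbf{R}$ by \[W(\xi)=\big|([\xi],\det\xi-y)\big|,\] the Euclidean norm of the vector $([\xi],\det\xi-y)\in\mathbf{R}^{2\times2}\times\mathbf{R}\cong\mathbf{R}^5$. Then for every $\xi\in\mathbf{R}^{2\times 2}$ and every $\eta\in\mathbf{R}^{2\times 2}$, \[W(\xi+\eta)-W(\xi)-DW(\xi)\cdot\eta\;\ge\;\rho(\xi)\det\eta,\qquad\text{where }\rho(\xi)=\frac{\det\xi-y}{W(\xi)}.\]
   Context: For $2\times2$ matrices, $\xi\cdot\eta=\mathrm{tr}(\xi^T\eta)$; for $a,b\in\mathbf{R}^2$, $a\otimes b$ is the matrix with $(i,j)$ entry $a_ib_j$. The function $W$ never vanishes (since $y\neq0$) and is differentiable everywhere; $DW(\xi)$ denotes its derivative (gradient) at $\xi$. *)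

theory Defs
  imports "HOL-Analysis.Analysis"
begin

definition outer :: "real^2 \<Rightarrow> real^2 \<Rightarrow> real^2^2" where
  "outer a b = (\<chi> i j. a $ i * b $ j)"

definition e1 :: "real^2" where
  "e1 = axis 1 1"

definition bracket :: "real^2^2 \<Rightarrow> real^2^2" where
  "bracket \<xi> = \<xi> - (\<xi> $ 1 $ 1) *\<^sub>R outer e1 e1"

text \<open>W(xi) = |([xi], det xi - y)|, Euclidean norm in R^{2x2} x R = R^5
  (the norm on real^2^2 is the Frobenius norm; on the product it is the
  Euclidean combination of the two norms).\<close>
definition W :: "real \<Rightarrow> real^2^2 \<Rightarrow> real" where
  "W y \<xi> = norm (bracket \<xi>, det \<xi> - y)"

definition rho :: "real \<Rightarrow> real^2^2 \<Rightarrow> real" where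
  "rho y \<xi> = (det \<xi> - y) / W y \<xi>"

end

theory Submission
  imports Defs
begin

text \<open>\<open>W = |F|\<close> with \<open>F(\<xi>) = ([\<xi>], det \<xi> - y)\<close> (\<open>W_vec\<close> below). Since \<open>F\<close> is linear plus a determinant, its
  expansion is exact at second order: \<open>F(\<xi> + \<eta>) = F(\<xi>) + DF(\<xi>)\<eta> + (0, det \<eta>)\<close>.
  The norm lies above its tangent at \<open>F(\<xi>) \<noteq> 0\<close> (Cauchy-Schwarz), and pairing the
  remainder \<open>(0, det \<eta>)\<close> with the unit normal \<open>F(\<xi>)/W(\<xi>)\<close> gives \<open>\<rho>(\<xi>) det \<eta>\<close>.\<close>

lemma norm_add_ge_tangent:
  fixes u v w :: "'a::real_inner"
  assumes "u \<noteq> 0"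
  shows "norm (u + v + w) - norm u - inner v (sgn u) \<ge> inner w (sgn u)"
proof -
  have "inner (u + v + w) u \<le> norm (u + v + w) * norm u"
    by (rule norm_cauchy_schwarz)
  then have "inner u u + inner v u + inner w u \<le> norm (u + v + w) * norm u"
    by (simp add: inner_add_left)
  moreover have "norm u > 0" using assms by simp
  ultimately show ?thesis
    by (simp add: sgn_div_norm inner_commute[of _ u] power2_norm_eq_inner[symmetric]
        field_simps power2_eq_square)
qed

definition det_deriv_2 :: "real^2^2 \<Rightarrow> real^2^2 \<Rightarrow> real" where
  "det_deriv_2 \<xi> \<eta> = \<xi>$1$1 * \<eta>$2$2 + \<eta>$1$1 * \<xi>$2$2 - \<xi>$1$2 * \<eta>$2$1 - \<eta>$1$2 * \<xi>$2$1"

lemma det_add_2: "det (\<xi> + \<eta>) = det \<xi> + det_deriv_2 \<xi> \<eta> + det (\<eta>::real^2^2)"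
  by (simp add: det_2 det_deriv_2_def algebra_simps)

lemma has_derivative_det_2: "(det has_derivative det_deriv_2 \<xi>) (at (\<xi>::real^2^2))"
proof -
  have entry: "((\<lambda>x::real^2^2. x$i$j) has_derivative (\<lambda>h. h$i$j)) (at \<xi>)" for i j
    by (intro bounded_linear_imp_has_derivative
        bounded_linear_compose[OF bounded_linear_vec_nth bounded_linear_vec_nth])
  show ?thesis
    unfolding det_2[abs_def] det_deriv_2_def
    by (rule derivative_eq_intros entry refl | simp add: algebra_simps)+
qed

lemma bounded_linear_bracket: "bounded_linear bracket"
  unfolding bracket_def
  by (intro bounded_linear_sub bounded_linear_ident
      bounded_linear_compose[OF bounded_linear_scaleR_left]
      bounded_linear_compose[OF bounded_linear_vec_nth bounded_linear_vec_nth])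

lemma det_eq_0_if_bracket_eq_0: "bracket \<xi> = 0 \<Longrightarrow> det \<xi> = 0"
  by (simp add: bracket_def outer_def e1_def det_2 vec_eq_iff forall_2 axis_def)

definition W_vec :: "real \<Rightarrow> real^2^2 \<Rightarrow> (real^2^2) \<times> real" where
  "W_vec y \<xi> = (bracket \<xi>, det \<xi> - y)"

lemma W_eq_norm_W_vec: "W y = (\<lambda>\<xi>. norm (W_vec y \<xi>))"
  by (simp add: W_def W_vec_def fun_eq_iff)

lemma W_vec_add:
  "W_vec y (\<xi> + \<eta>) = W_vec y \<xi> + (bracket \<eta>, det_deriv_2 \<xi> \<eta>) + (0, det \<eta>)"
  using linear_add[OF bounded_linear.linear[OF bounded_linear_bracket]]
  by (simp add: W_vec_def det_add_2)

lemma W_vec_nonzero: "y \<noteq> 0 \<Longrightarrow> W_vec y \<xi> \<noteq> 0"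
  using det_eq_0_if_bracket_eq_0 by (auto simp: W_vec_def zero_prod_def)

lemma has_derivative_W_vec:
  "(W_vec y has_derivative (\<lambda>\<eta>. (bracket \<eta>, det_deriv_2 \<xi> \<eta>))) (at \<xi>)"
  unfolding W_vec_def
  by (intro has_derivative_Pair bounded_linear_imp_has_derivative bounded_linear_bracket
      has_derivative_eq_rhs[OF has_derivative_diff[OF has_derivative_det_2 has_derivative_const]])
    simp

lemma has_derivative_W:
  assumes "y \<noteq> 0"
  shows "(W y has_derivative (\<lambda>\<eta>. inner (bracket \<eta>, det_deriv_2 \<xi> \<eta>) (sgn (W_vec y \<xi>)))) (at \<xi>)"
  unfolding W_eq_norm_W_vec
  using has_derivative_compose[OF has_derivative_W_vec has_derivative_norm[OF W_vec_nonzero[OF assms]]]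
  by (simp add: o_def)

theorem proposition2p1:
  fixes y :: real and \<xi> \<eta> :: "real^2^2"
  assumes "y > 0"
  shows "W y differentiable (at \<xi>) \<and>
         W y (\<xi> + \<eta>) - W y \<xi> - frechet_derivative (W y) (at \<xi>) \<eta> \<ge> rho y \<xi> * det \<eta>"
proof
  have y: "y \<noteq> 0" using assms by simp
  show "W y differentiable (at \<xi>)"
    using has_derivative_W[OF y] by (auto simp: differentiable_def)
  let ?u = "W_vec y \<xi>" and ?v = "(bracket \<eta>, det_deriv_2 \<xi> \<eta>)" and ?w = "(0, det \<eta>)"
  have "frechet_derivative (W y) (at \<xi>) \<eta> = inner ?v (sgn ?u)"
    by (simp add: frechet_derivative_at[OF has_derivative_W[OF y], symmetric])
  moreover have "W y (\<xi> + \<eta>) = norm (?u + ?v + ?w)" and "W y \<xi> = norm ?u"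
    by (simp_all add: W_eq_norm_W_vec W_vec_add)
  moreover have "inner ?w (sgn ?u) = rho y \<xi> * det \<eta>"
    by (simp add: sgn_div_norm rho_def W_def W_vec_def field_simps)
  ultimately show "W y (\<xi> + \<eta>) - W y \<xi> - frechet_derivative (W y) (at \<xi>) \<eta> \<ge> rho y \<xi> * det \<eta>"
    using norm_add_ge_tangent[OF W_vec_nonzero[OF y, of \<xi>], where v = ?v and w = ?w] by linarith
qed

end
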